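(* Let $\Sigma$ be a finite alphabet, $L \subseteq \Sigma^*$ a regular language, and $\mathcal{B}$ a DFA recognizing $L^\mathsf{R}$ that is not well-behaved. Then $V_L(n) \in \Omega(n)$ and $F_L(n) \in \mathcal{O}(n)\setminus o(n)$.
   Context: $L^\mathsf{R}=\{x^\mathsf{R}:x\in L\}$ (word reversal). A DFA $(Q,\Sigma,q_0,\delta,F)$ is well-behaved if every strongly connected component $C$ (inclusion-maximal set of mutually reachable states) reachable from $q_0$ satisfies: for all $q\in C$ and $u,v\in\Sigma^*$ with $|u|=|v|$ and $\delta(q,u),\delta(q,v)\in C$, $\delta(q,u)\in F\iff\delta(q,v)\in F$. A streaming algorithm is a deterministic (possibly infinite-state) automaton with an injective encoding $\mathrm{enc}$ of states into bit strings. Fixed-size: fix $a\in\Sigma$, $\mathrm{last}_n(a_1\cdots a_m)=a_{m-n+1}\cdots a_m$ if $n\le m$, else $a^{n-m}a_1\cdots a_m$; a fixed-size algorithm is $(\mathcal{A}_n)$ with $\mathcal{A}_n$ accepting $\{w:\mathrm{last}_n(w)\in L\}$, space at $n$ = maximal encoding length of a state of $\mathcal{A}_n$; $F_L(n)$ is the minimum over all such algorithms. Variable-size: over $\overline\Sigma=\Sigma\cup\{\downarrow\}$, $\mathrm{wnd}(\varepsilon)=\varepsilon$, $\mathrm{wnd}(ub)=\mathrm{wnd}(u)b$ ($b\in\Sigma$), $\mathrm{wnd}(u\!\downarrow)=\varepsilon$ if $\mathrm{wnd}(u)=\varepsilon$, $\mathrm{wnd}(u\!\downarrow)=v$ if $\mathrm{wnd}(u)=bv$;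 an algorithm accepts $\{w:\mathrm{wnd}(w)\in L\}$ and has space complexity $v_\mathcal{A}(n)=\max\{|\mathrm{enc}(\mathcal{A}(u'))|: u' \text{ prefix of } u,\ |\mathrm{wnd}(v)|\le n\text{ for all prefixes }v\text{ of }u\}$; $V_L(n)$ is the minimum of $v_\mathcal{A}(n)$ over all such algorithms. *)

theory Defs
  imports Complex_Main "HOL-Library.Extended_Real" "HOL-Library.Sublist"
begin

record ('q,'a) dfa =
  dstates :: "'q set"
  dinit :: 'q
  dtrans :: "'q \<Rightarrow> 'a \<Rightarrow> 'q"
  dfinal :: "'q set"

definition wf_dfa :: "('q,'a) dfa \<Rightarrow> bool" where
  "wf_dfa B \<longleftrightarrow> finite (dstates B) \<and> dinit B \<in> dstates B \<and>
     (\<forall>q\<in>dstates B. \<forall>x. dtrans B q x \<in> dstates B) \<and> dfinal B \<subseteq> dstates B"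

definition dstar :: "('q,'a) dfa \<Rightarrow> 'q \<Rightarrow> 'a list \<Rightarrow> 'q" where
  "dstar B q w = foldl (dtrans B) q w"

definition dlang :: "('q,'a) dfa \<Rightarrow> 'a list set" where
  "dlang B = {w. dstar B (dinit B) w \<in> dfinal B}"

definition regular :: "'a list set \<Rightarrow> bool" where
  "regular L \<longleftrightarrow> (\<exists>B :: (nat,'a) dfa. wf_dfa B \<and> dlang B = L)"

definition reach :: "('q,'a) dfa \<Rightarrow> 'q \<Rightarrow> 'q \<Rightarrow> bool" where
  "reach B p q \<longleftrightarrow> (\<exists>w. dstar B p w = q)"

definition is_scc :: "('q,'a) dfa \<Rightarrow> 'q set \<Rightarrow> bool" where
  "is_scc B C \<longleftrightarrow> C \<subseteq> dstates B \<and> C \<noteq> {} \<and> (\<forall>p\<in>C. \<forall>q\<in>C. reach B p q) \<and>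
     (\<forall>D. C \<subseteq> D \<and> D \<subseteq> dstates B \<and> (\<forall>p\<in>D. \<forall>q\<in>D. reach B p q) \<longrightarrow> D = C)"

definition well_behaved :: "('q,'a) dfa \<Rightarrow> bool" where
  "well_behaved B \<longleftrightarrow>
     (\<forall>C. is_scc B C \<and> (\<exists>q\<in>C. reach B (dinit B) q) \<longrightarrow>
        (\<forall>q\<in>C. \<forall>u v. length u = length v \<and> dstar B q u \<in> C \<and> dstar B q v \<in> C \<longrightarrow>
            (dstar B q u \<in> dfinal B \<longleftrightarrow> dstar B q v \<in> dfinal B)))"

text \<open>Deterministic (possibly infinite-state) automaton with an injective encoding of
  its states into bit strings.\<close>
record ('s,'b) salg =
  sstates :: "'s set"
  sinit :: 's
  strans :: "'s \<Rightarrow> 'b \<Rightarrow> 's"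
  sacc :: "'s set"
  senc :: "'s \<Rightarrow> bool list"

definition wf_salg :: "('s,'b) salg \<Rightarrow> bool" where
  "wf_salg A \<longleftrightarrow> sinit A \<in> sstates A \<and> (\<forall>s\<in>sstates A. \<forall>x. strans A s x \<in> sstates A) \<and>
     sacc A \<subseteq> sstates A \<and> inj_on (senc A) (sstates A)"

definition srun :: "('s,'b) salg \<Rightarrow> 'b list \<Rightarrow> 's" where
  "srun A w = foldl (strans A) (sinit A) w"

definition slang :: "('s,'b) salg \<Rightarrow> 'b list set" where
  "slang A = {w. srun A w \<in> sacc A}"

definition lastn :: "'a \<Rightarrow> nat \<Rightarrow> 'a list \<Rightarrow> 'a list" where
  "lastn a n w = (if n \<le> length w then drop (length w - n) w
                  else replicate (n - length w) a @ w)"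

definition fixed_space :: "('s,'b) salg \<Rightarrow> enat" where
  "fixed_space A = (SUP s\<in>sstates A. enat (length (senc A s)))"

definition F_fixed :: "'a \<Rightarrow> 'a list set \<Rightarrow> nat \<Rightarrow> enat" where
  "F_fixed a L n = (INF A \<in> {A :: (nat,'a) salg. wf_salg A \<and> slang A = {w. lastn a n w \<in> L}}.
                      fixed_space A)"

subsection \<open>Variable-size sliding window model (None encodes the pop symbol)\<close>

fun wstep :: "'a list \<Rightarrow> 'a option \<Rightarrow> 'a list" where
  "wstep v (Some b) = v @ [b]"
| "wstep v None = tl v"

definition wnd :: "'a option list \<Rightarrow> 'a list" where
  "wnd w = foldl wstep [] w"

definition var_space :: "('s,'a option) salg \<Rightarrow> nat \<Rightarrow> enat" where
  "var_space A n = (SUP u \<in> {u. \<forall>v. prefix v u \<longrightarrow> length (wnd v) \<le> n}.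
                      SUP u' \<in> {u'. prefix u' u}. enat (length (senc A (srun A u'))))"

definition V_var :: "'a list set \<Rightarrow> nat \<Rightarrow> enat" where
  "V_var L n = (INF A \<in> {A :: (nat,'a option) salg. wf_salg A \<and> slang A = {w. wnd w \<in> L}}.
                  var_space A n)"

end

theory Submission
  imports Defs "HOL-Library.Countable"
begin

text \<open>If \<open>\<B>\<close> is not well-behaved, there is a reachable state \<open>q\<close> with two loops \<open>u\<close>, \<open>v\<close>
  of the same length \<open>P > 0\<close> whose prefixes of some length \<open>k\<close> lead to an accepting and a
  rejecting state, respectively. Concatenating \<open>M\<close> such loops according to a bit string
  \<open>bs\<close> gives a word whose reversal is a sliding window of length about \<open>M P\<close>; appending a
  suitable suffix then tests any single bit of \<open>bs\<close> for membership in \<open>L\<close>. So a sliding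
  window algorithm must reach \<open>2\<^sup>M\<close> distinct states, one of which has an encoding of length
  \<open>\<ge> M\<close>; this gives the linear lower bounds for both models. Conversely, storing the
  window itself with a fixed-length code per symbol solves the fixed-size problem in linear
  space.\<close>

lemma dstar_append: "dstar B q (u @ v) = dstar B (dstar B q u) v"
  by (simp add: dstar_def)

lemma dstar_Nil [simp]: "dstar B q [] = q"
  by (simp add: dstar_def)

lemma reach_trans: "reach B p q \<Longrightarrow> reach B q r \<Longrightarrow> reach B p r"
  unfolding reach_def by (metis dstar_append)

lemma in_iff_rev_in_dlang:
  "dlang B = rev ` L \<Longrightarrow> w \<in> L \<longleftrightarrow> dstar B (dinit B) (rev w) \<in> dfinal B"
  unfolding dlang_def by (metis (no_types) image_iff mem_Collect_eq rev_rev_ident)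

lemma srun_append: "srun A (u @ v) = foldl (strans A) (srun A u) v"
  by (simp add: srun_def)

lemma srun_in_sstates: "wf_salg A \<Longrightarrow> srun A w \<in> sstates A"
  by (induct w rule: rev_induct) (auto simp: srun_def wf_salg_def)

lemma srun_eq_imp_append_in_slang_iff:
  "srun A u = srun A v \<Longrightarrow> u @ e \<in> slang A \<longleftrightarrow> v @ e \<in> slang A"
  by (simp add: slang_def srun_append)

lemma foldl_wstep_map_Some: "foldl wstep w (map Some xs) = w @ xs"
  by (induct xs arbitrary: w) auto

lemma foldl_wstep_replicate_None: "foldl wstep w (replicate d None) = drop d w"
  by (induct d arbitrary: w) (auto simp: drop_Suc)

lemma wnd_append: "wnd (u @ v) = foldl wstep (wnd u) v"
  by (simp add: wnd_def)

lemma wnd_map_Some: "wnd (map Some xs) = xs"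
  by (simp add: wnd_def foldl_wstep_map_Some)

lemma lastn_eq_drop: "lastn a n w = drop (length w) (replicate n a @ w)"
  by (simp add: lastn_def)

lemma length_lastn [simp]: "length (lastn a n w) = n"
  by (simp add: lastn_def)

lemma lastn_Nil: "lastn a n [] = replicate n a"
  by (simp add: lastn_def)

lemma lastn_snoc: "lastn a n (w @ [c]) = tl (lastn a n w @ [c])"
proof -
  have "lastn a n (w @ [c]) = tl (drop (length w) ((replicate n a @ w) @ [c]))"
    by (simp only: lastn_eq_drop length_append_singleton append_assoc drop_Suc tl_drop)
  also have "drop (length w) ((replicate n a @ w) @ [c]) = drop (length w) (replicate n a @ w) @ [c]"
    by simp
  finally show ?thesis
    by (simp only: lastn_eq_drop)
qed

lemma lastn_append_full:
  assumes "length w = n" "length z \<le> n"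
  shows "lastn a n (w @ z) = drop (length z) w @ z"
  using assms by (simp add: lastn_eq_drop)


section \<open>Space lower bounds from fooling sets\<close>

lemma card_bool_lists_shorter: "card {bs :: bool list. length bs < M} < 2 ^ M"
proof (induct M)
  case (Suc M)
  have split: "{bs :: bool list. length bs < Suc M} = {bs. length bs < M} \<union> {bs. length bs = M}"
    by auto
  have "card {bs :: bool list. length bs = M} = 2 ^ M"
    using card_lists_length_eq[of "UNIV :: bool set" M] by simp
  then show ?case
    unfolding split using card_Un_le[of "{bs :: bool list. length bs < M}" "{bs. length bs = M}"] Suc
    by simp
qed simp

lemma exists_long_encoding:
  fixes e :: "'s \<Rightarrow> bool list"
  assumes "inj_on e S" "2 ^ M \<le> card S"
  shows "\<exists>s\<in>S. M \<le> length (e s)"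
proof (rule ccontr)
  assume "\<not> ?thesis"
  then have "e ` S \<subseteq> {bs. length bs < M}" by force
  moreover have "finite {bs :: bool list. length bs < M}"
    using finite_lists_length_le[of "UNIV :: bool set" M]
    by (auto intro: finite_subset[of _ "{xs. length xs \<le> M}"])
  ultimately have "card (e ` S) \<le> card {bs :: bool list. length bs < M}"
    by (rule card_mono[rotated])
  then show False
    using card_image[OF assms(1)] card_bool_lists_shorter[of M] assms(2) by linarith
qed

lemma inj_on_srun_if_separating:
  assumes "\<And>i. i < M \<Longrightarrow> \<exists>e. \<forall>bs. length bs = M \<longrightarrow> (w bs @ e \<in> slang A \<longleftrightarrow> bs ! i)"
  shows "inj_on (\<lambda>bs. srun A (w bs)) {bs. length bs = M}"
proof (rule inj_onI, rule ccontr)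
  fix bs cs
  assume bs: "bs \<in> {bs. length bs = M}" and cs: "cs \<in> {bs. length bs = M}"
    and same: "srun A (w bs) = srun A (w cs)" and "bs \<noteq> cs"
  then obtain i where i: "i < M" "bs ! i \<noteq> cs ! i"
    using nth_equalityI[of bs cs] by auto
  obtain e where "\<forall>ds. length ds = M \<longrightarrow> (w ds @ e \<in> slang A \<longleftrightarrow> ds ! i)"
    using assms[OF i(1)] by blast
  then show False
    using srun_eq_imp_append_in_slang_iff[OF same, of e] bs cs i(2) by auto
qed

lemma long_state_if_separating:
  assumes "wf_salg A"
    and "\<And>i. i < M \<Longrightarrow> \<exists>e. \<forall>bs. length bs = M \<longrightarrow> (w bs @ e \<in> slang A \<longleftrightarrow> bs ! i)"
  shows "\<exists>bs. length bs = M \<and> M \<le> length (senc A (srun A (w bs)))"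
proof -
  let ?S = "(\<lambda>bs. srun A (w bs)) ` {bs. length bs = M}"
  have "card ?S = card {bs :: bool list. length bs = M}"
    using card_image[OF inj_on_srun_if_separating[OF assms(2)]] .
  also have "\<dots> = 2 ^ M"
    using card_lists_length_eq[of "UNIV :: bool set" M] by simp
  finally have "2 ^ M \<le> card ?S" by simp
  moreover have "inj_on (senc A) ?S"
    using assms(1) srun_in_sstates[OF assms(1)] unfolding wf_salg_def
    by (auto intro: inj_on_subset)
  ultimately show ?thesis
    using exists_long_encoding[of "senc A" ?S M] by blast
qed

lemma var_space_ge_of_insertions:
  assumes "length xs \<le> n"
  shows "enat (length (senc A (srun A (map Some xs)))) \<le> var_space A n"
proof -
  have "length (wnd v) \<le> n" if "prefix v (map Some xs)" for v
  proof -
    from that have "v = take (length v) (map Some xs)"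
      by (auto simp: prefix_def)
    then have "wnd v = take (length v) xs"
      by (metis take_map wnd_map_Some)
    then show ?thesis
      using assms by simp
  qed
  then have "(SUP u'\<in>{u'. prefix u' (map Some xs)}. enat (length (senc A (srun A u'))))
      \<le> var_space A n"
    unfolding var_space_def by (intro SUP_upper) simp
  then show ?thesis
    by (rule order_trans[rotated]) (rule SUP_upper, simp)
qed

lemma fixed_space_ge: "wf_salg A \<Longrightarrow> enat (length (senc A (srun A w))) \<le> fixed_space A"
  unfolding fixed_space_def by (rule SUP_upper) (rule srun_in_sstates)


section \<open>Loops witnessing that a DFA is not well-behaved\<close>

lemma not_well_behavedE:
  assumes "\<not> well_behaved B"
  obtains x q u v k where "dstar B (dinit B) x = q" "dstar B q u = q" "dstar B q v = q"
    "length u = length v" "0 < length u" "k \<le> length u"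
    "dstar B q (take k u) \<in> dfinal B" "dstar B q (take k v) \<notin> dfinal B"
proof -
  from assms obtain C q0 q u v where C: "is_scc B C" and q0: "q0 \<in> C" "reach B (dinit B) q0"
    and q: "q \<in> C" and uv: "length u = length v" "dstar B q u \<in> C" "dstar B q v \<in> C"
    and differ: "\<not> (dstar B q u \<in> dfinal B \<longleftrightarrow> dstar B q v \<in> dfinal B)"
    unfolding well_behaved_def by blast
  have strong: "\<forall>p\<in>C. \<forall>r\<in>C. reach B p r"
    using C unfolding is_scc_def by blast
  obtain x where x: "dstar B (dinit B) x = q"
    using reach_trans[OF q0(2)] strong q0(1) q unfolding reach_def by blast
  obtain u' v' where uv': "length u' = length v'" "dstar B q u' \<in> C" "dstar B q v' \<in> C"
    "dstar B q u' \<in> dfinal B" "dstar B q v' \<notin> dfinal B"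
  proof (cases "dstar B q u \<in> dfinal B")
    case True
    then show thesis
      using that[of u v] uv differ by simp
  next
    case False
    then show thesis
      using that[of v u] uv differ by simp
  qed
  obtain y z where y: "dstar B (dstar B q u') y = q" and z: "dstar B (dstar B q v') z = q"
    using strong uv' q unfolding reach_def by blast
  have "u' \<noteq> []" "v' \<noteq> []"
    using uv' by (metis dstar_Nil length_0_conv)+
  \<comment> \<open>Closing \<open>u'\<close> and \<open>v'\<close> to loops and concatenating them in both orders yields two loops
    of equal length that differ in acceptance after \<open>|u'|\<close> symbols.\<close>
  then show thesis
    using that[of x q "(u' @ y) @ v' @ z" "(v' @ z) @ u' @ y" "length u'"] x y z uv'
    by (simp add: dstar_append)
qed

locale separating_loops =
  fixes B :: "('q, 'a) dfa" and L :: "'a list set" and x :: "'a list" and q :: 'q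
    and u v :: "'a list" and k P :: nat
  assumes lang: "dlang B = rev ` L"
    and reach_q: "dstar B (dinit B) x = q"
    and loop_u: "dstar B q u = q" and loop_v: "dstar B q v = q"
    and length_u: "length u = P" and length_v: "length v = P" and P_pos: "0 < P"
    and k_le: "k \<le> P"
    and accept_u: "dstar B q (take k u) \<in> dfinal B"
    and reject_v: "dstar B q (take k v) \<notin> dfinal B"
begin

definition loop :: "bool \<Rightarrow> 'a list" where
  "loop b = (if b then u else v)"

definition code :: "bool list \<Rightarrow> 'a list" where
  "code bs = concat (map loop bs)"

lemma dstar_code: "dstar B q (code bs) = q"
  by (induct bs) (auto simp: code_def loop_def dstar_append loop_u loop_v)

lemma length_code [simp]: "length (code bs) = length bs * P"
  by (induct bs) (auto simp: code_def loop_def length_u length_v)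

lemma offset_le: "i < M \<Longrightarrow> i * P + k \<le> M * P"
  using mult_le_mono1[of "Suc i" M P] k_le by simp

lemma take_code:
  assumes "i < length bs" "j \<le> P"
  shows "take (i * P + j) (code bs) = code (take i bs) @ take j (loop (bs ! i))"
proof -
  have "code bs = code (take i bs) @ loop (bs ! i) @ code (drop (Suc i) bs)"
    by (subst id_take_nth_drop[OF assms(1)]) (simp add: code_def)
  moreover have "length (code (take i bs)) = i * P"
    using assms(1) by (simp add: min_absorb2)
  moreover have "length (loop (bs ! i)) = P"
    by (simp add: loop_def length_u length_v)
  ultimately show ?thesis
    using assms(2) by (simp del: length_code)
qed

lemma reversed_prefix_in_L_iff:
  assumes "i < length bs" "dstar B (dinit B) y = q"
  shows "rev (take (i * P + k) (code bs)) @ rev y \<in> L \<longleftrightarrow> bs ! i"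
  using take_code[OF assms(1) k_le] in_iff_rev_in_dlang[OF lang] assms(2) accept_u reject_v
  by (simp add: dstar_append dstar_code loop_def)

text \<open>Variable-size model: insert \<open>rev (code bs)\<close>, then pop until only the part read off by
  \<open>\<B>\<close> up to the \<open>k\<close>-th symbol of block \<open>i\<close> remains, then insert \<open>rev x\<close>.\<close>

lemma var_space_lower_bound:
  assumes "wf_salg A" "slang A = {w. wnd w \<in> L}" "M * P \<le> n"
  shows "enat M \<le> var_space A n"
proof -
  define suffix where "suffix i = replicate (M * P - (i * P + k)) None @ map Some (rev x)" for i
  have "map Some (rev (code bs)) @ suffix i \<in> slang A \<longleftrightarrow> bs ! i"
    if i: "i < M" and bs: "length bs = M" for i bs
  proof -
    have "wnd (map Some (rev (code bs)) @ suffix i) = rev (take (i * P + k) (code bs)) @ rev x"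
      using offset_le[OF i] bs
      by (simp add: suffix_def wnd_append wnd_map_Some foldl_wstep_map_Some
          foldl_wstep_replicate_None drop_rev)
    then show ?thesis
      using assms(2) reversed_prefix_in_L_iff[OF _ reach_q] i bs by simp
  qed
  then obtain bs where "length bs = M" "M \<le> length (senc A (srun A (map Some (rev (code bs)))))"
    using long_state_if_separating[OF assms(1), of M "\<lambda>bs. map Some (rev (code bs))"] by blast
  then show ?thesis
    using var_space_ge_of_insertions[of "rev (code bs)" n A] assms(3)
    by (simp add: order_trans[OF enat_ord_simps(1)[THEN iffD2]])
qed

text \<open>Fixed-size model with \<open>n = |x| + k + M P\<close>: the padding makes the first input fill the
  window; the suffix \<open>rev (x \<cdot> u\<^sup>M\<^sup>-\<^sup>i)\<close> pushes out all but the part read off by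
  \<open>\<B>\<close> up to the \<open>k\<close>-th symbol of block \<open>i\<close>.\<close>

lemma fixed_space_lower_bound:
  assumes "wf_salg A" "slang A = {w. lastn a n w \<in> L}" "n = length x + k + M * P"
  shows "enat M \<le> fixed_space A"
proof -
  define w where "w bs = rev (code bs @ replicate (length x + k) a)" for bs
  define y where "y i = x @ code (replicate (M - i) True)" for i
  have "w bs @ rev (y i) \<in> slang A \<longleftrightarrow> bs ! i" if i: "i < M" and bs: "length bs = M" for i bs
  proof -
    have y_q: "dstar B (dinit B) (y i) = q"
      by (simp add: y_def dstar_append reach_q dstar_code)
    have length_y: "length (y i) + (i * P + k) = n"
      using assms(3) i by (simp add: y_def add_mult_distrib[symmetric])
    have "length (code bs @ replicate (length x + k) a) - length (y i) = i * P + k"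
      using length_y assms(3) bs by simp
    then have "drop (length (y i)) (w bs) = rev (take (i * P + k) (code bs))"
      using bs offset_le[OF i] by (simp only: w_def drop_rev) simp
    moreover have "lastn a n (w bs @ rev (y i)) = drop (length (y i)) (w bs) @ rev (y i)"
      using lastn_append_full[of "w bs" n "rev (y i)" a] assms(3) bs length_y by (simp add: w_def)
    ultimately show ?thesis
      using assms(2) reversed_prefix_in_L_iff[OF _ y_q] i bs by simp
  qed
  then obtain bs where "M \<le> length (senc A (srun A (w bs)))"
    using long_state_if_separating[OF assms(1), of M w] by blast
  then show ?thesis
    using fixed_space_ge[OF assms(1), of "w bs"]
    by (simp add: order_trans[OF enat_ord_simps(1)[THEN iffD2]])
qed

lemma V_var_lower_bound: "M * P \<le> n \<Longrightarrow> enat M \<le> V_var L n"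
  unfolding V_var_def by (rule INF_greatest) (use var_space_lower_bound in auto)

lemma F_fixed_lower_bound: "enat M \<le> F_fixed a L (length x + k + M * P)"
  unfolding F_fixed_def by (rule INF_greatest) (use fixed_space_lower_bound in auto)

end


section \<open>The window-storing algorithm\<close>

definition onehot :: "'a list \<Rightarrow> 'a \<Rightarrow> bool list" where
  "onehot xs c = map (\<lambda>y. y = c) xs"

definition onehot_word :: "'a list \<Rightarrow> 'a list \<Rightarrow> bool list" where
  "onehot_word xs w = concat (map (onehot xs) w)"

lemma length_onehot_word: "length (onehot_word xs w) = length w * length xs"
  by (induct w) (auto simp: onehot_word_def onehot_def)

lemma onehot_word_inj:
  assumes "set xs = UNIV"
  shows "length w1 = length w2 \<Longrightarrow> onehot_word xs w1 = onehot_word xs w2 \<Longrightarrow> w1 = w2"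
proof (induct w1 arbitrary: w2)
  case (Cons c w1)
  then obtain d w2' where w2: "w2 = d # w2'"
    by (cases w2) auto
  have "onehot xs c @ onehot_word xs w1 = onehot xs d @ onehot_word xs w2'"
    using Cons(3) w2 by (simp add: onehot_word_def)
  then have "onehot xs c = onehot xs d" "onehot_word xs w1 = onehot_word xs w2'"
    by (auto simp: onehot_def append_eq_append_conv)
  moreover from this(1) have "c = d"
    unfolding onehot_def using assms by (metis (mono_tags) UNIV_I map_eq_conv)
  ultimately show ?case
    using Cons w2 by simp
qed simp

text \<open>The state is the current window, numbered by \<open>to_nat\<close> since states must be natural
  numbers; \<open>xs\<close> enumerates the alphabet for the one-hot code.\<close>

definition window_alg :: "'a::countable \<Rightarrow> 'a list set \<Rightarrow> nat \<Rightarrow> 'a list \<Rightarrow> (nat, 'a) salg" where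
  "window_alg a L n xs =
     \<lparr> sstates = to_nat ` {w :: 'a list. length w = n}, sinit = to_nat (replicate n a),
       strans = (\<lambda>s c. to_nat (tl (from_nat s @ [c]))),
       sacc = to_nat ` {w. length w = n \<and> w \<in> L},
       senc = (\<lambda>s. onehot_word xs (from_nat s)) \<rparr>"

lemma srun_window_alg: "srun (window_alg a L n xs) w = to_nat (lastn a n w)"
  by (induct w rule: rev_induct) (auto simp: srun_def window_alg_def lastn_Nil lastn_snoc)

lemma wf_window_alg:
  assumes "set xs = UNIV"
  shows "wf_salg (window_alg a L n xs)"
  unfolding wf_salg_def
proof (intro conjI)
  show "inj_on (senc (window_alg a L n xs)) (sstates (window_alg a L n xs))"
    by (rule inj_onI) (auto simp: window_alg_def dest: onehot_word_inj[OF assms])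
qed (auto simp: window_alg_def)

lemma slang_window_alg: "slang (window_alg a L n xs) = {w. lastn a n w \<in> L}"
proof -
  have "to_nat (lastn a n w) \<in> to_nat ` {w. length w = n \<and> w \<in> L} \<longleftrightarrow> lastn a n w \<in> L" for w
    by (auto dest: injD[OF inj_to_nat])
  then show ?thesis
    unfolding slang_def srun_window_alg by (simp add: window_alg_def)
qed

lemma fixed_space_window_alg: "fixed_space (window_alg a L n xs) \<le> enat (n * length xs)"
  unfolding fixed_space_def by (rule SUP_least) (auto simp: window_alg_def length_onehot_word)

lemma F_fixed_linear_upper_bound:
  fixes a :: "'a::finite"
  shows "\<exists>K. \<forall>n. F_fixed a L n \<le> enat (n * K)"
proof -
  obtain xs :: "'a list" where xs: "set xs = UNIV"
    using finite_list[of "UNIV :: 'a set"] by auto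
  have "F_fixed a L n \<le> enat (n * length xs)" for n
    unfolding F_fixed_def
    by (rule INF_lower2[of "window_alg a L n xs"])
       (use wf_window_alg[OF xs] slang_window_alg fixed_space_window_alg in simp_all)
  then show ?thesis by blast
qed


lemma eventually_linear_lower_bound:
  fixes f :: "nat \<Rightarrow> enat"
  assumes "0 < P" "\<And>M n. M * P \<le> n \<Longrightarrow> enat M \<le> f n"
  shows "\<exists>c>0. \<forall>\<^sub>F n in sequentially. ereal (c * real n) \<le> ereal_of_enat (f n)"
proof (intro exI conjI)
  show "\<forall>\<^sub>F n in sequentially. ereal (1 / (2 * real P) * real n) \<le> ereal_of_enat (f n)"
    unfolding eventually_sequentially
  proof (intro exI allI impI)
    fix n assume n: "P \<le> n"
    define M where "M = n div P"
    have "1 \<le> M"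
      using div_le_mono[OF n, of P] assms(1) by (simp add: M_def)
    have "n < Suc M * P"
      unfolding M_def using assms(1) div_less_iff_less_mult by blast
    also have "\<dots> \<le> 2 * M * P"
      using \<open>1 \<le> M\<close> by (intro mult_le_mono1) simp
    finally have "real n \<le> 2 * real M * real P"
      by (metis less_imp_le of_nat_mono of_nat_mult of_nat_numeral)
    then have "ereal (1 / (2 * real P) * real n) \<le> ereal (real M)"
      using assms(1) by (simp add: field_simps)
    also have "\<dots> \<le> ereal_of_enat (f n)"
      using assms(2)[of M n] by (simp add: M_def flip: ereal_of_enat_le_iff)
    finally show "ereal (1 / (2 * real P) * real n) \<le> ereal_of_enat (f n)" .
  qed
qed (use assms(1) in simp)

lemma eventually_linear_upper_bound:
  fixes f :: "nat \<Rightarrow> enat"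
  assumes "\<And>n. f n \<le> enat (n * K)"
  shows "\<exists>c. \<forall>\<^sub>F n in sequentially. ereal_of_enat (f n) \<le> ereal (c * real n)"
proof (intro exI always_eventually allI)
  fix n
  show "ereal_of_enat (f n) \<le> ereal (real K * real n)"
    using assms[of n] by (simp add: mult.commute flip: ereal_of_enat_le_iff)
qed

lemma not_eventually_sublinear:
  fixes f :: "nat \<Rightarrow> enat"
  assumes "0 < P" "\<And>M. enat M \<le> f (d + M * P)"
  shows "\<not> (\<forall>c>0. \<forall>\<^sub>F n in sequentially. ereal_of_enat (f n) \<le> ereal (c * real n))"
proof
  assume sublinear: "\<forall>c>0. \<forall>\<^sub>F n in sequentially. ereal_of_enat (f n) \<le> ereal (c * real n)"
  have "\<forall>\<^sub>F n in sequentially. ereal_of_enat (f n) \<le> ereal (1 / (2 * real P) * real n)"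
    using spec[OF sublinear, of "1 / (2 * real P)"] assms(1) by simp
  then obtain N where N: "\<And>n. N \<le> n \<Longrightarrow> ereal_of_enat (f n) \<le> ereal (1 / (2 * real P) * real n)"
    unfolding eventually_sequentially by blast
  define M where "M = N + d + 1"
  have "M \<le> M * P"
    using assms(1) by simp
  then have "N \<le> d + M * P"
    by (simp add: M_def)
  have "ereal (real M) \<le> ereal_of_enat (f (d + M * P))"
    using assms(2)[of M] by (simp flip: ereal_of_enat_le_iff)
  also have "\<dots> \<le> ereal (1 / (2 * real P) * real (d + M * P))"
    using N[OF \<open>N \<le> d + M * P\<close>] .
  finally have "real M \<le> real d / (2 * real P) + real M / 2"
    using assms(1) by (simp add: field_simps)
  also have "\<dots> \<le> real d / 2 + real M / 2"
    using assms(1) by (intro add_right_mono divide_left_mono) auto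
  finally have "real M \<le> real d"
    by simp
  then show False
    by (simp add: M_def)
qed

theorem theorem5p3:
  fixes L :: "'a::finite list set" and B :: "('q,'a) dfa" and a :: 'a
  assumes "regular L"
    and "wf_dfa B" and "dlang B = rev ` L"
    and "\<not> well_behaved B"
  shows "(\<exists>c>0. \<forall>\<^sub>F n in sequentially. ereal (c * real n) \<le> ereal_of_enat (V_var L n))
       \<and> (\<exists>c. \<forall>\<^sub>F n in sequentially. ereal_of_enat (F_fixed a L n) \<le> ereal (c * real n))
       \<and> \<not> (\<forall>c>0. \<forall>\<^sub>F n in sequentially. ereal_of_enat (F_fixed a L n) \<le> ereal (c * real n))"
proof -
  obtain x q u v k where "dstar B (dinit B) x = q" "dstar B q u = q" "dstar B q v = q"
    "length u = length v" "0 < length u" "k \<le> length u"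
    "dstar B q (take k u) \<in> dfinal B" "dstar B q (take k v) \<notin> dfinal B"
    using not_well_behavedE[OF assms(4)] by blast
  then interpret separating_loops B L x q u v k "length u"
    using assms(3) by unfold_locales simp_all
  obtain K where "\<And>n. F_fixed a L n \<le> enat (n * K)"
    using F_fixed_linear_upper_bound by blast
  then have "\<exists>c. \<forall>\<^sub>F n in sequentially. ereal_of_enat (F_fixed a L n) \<le> ereal (c * real n)"
    by (rule eventually_linear_upper_bound)
  with eventually_linear_lower_bound[of "length u" "V_var L", OF P_pos V_var_lower_bound]
    not_eventually_sublinear[of "length u" "F_fixed a L", OF P_pos F_fixed_lower_bound]
  show ?thesis
    by blast
qed

end
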